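(* Let $\beta>0$, $f:[-1,1]\to\mathbb{R}$ any function, $g(r)=\frac12\log(1-r^2)+\frac{\beta^2}{2}(1-r^2)^2$ and $\tilde{\mathcal{B}}(\alpha,r)=f(r\alpha)+\sqrt2\beta r^2\sqrt{1-\alpha^2}+g(r)$. Then $r\mapsto\tilde{\mathcal{B}}(0,r)$ is strictly decreasing on $[0,1)$. *)

theory Defs
  imports Complex_Main
begin

definition g_fun :: "real \<Rightarrow> real \<Rightarrow> real" where
  "g_fun \<beta> r = 1/2 * ln (1 - r^2) + \<beta>^2 / 2 * (1 - r^2)^2"

definition Btilde :: "(real \<Rightarrow> real) \<Rightarrow> real \<Rightarrow> real \<Rightarrow> real \<Rightarrow> real" where
  "Btilde f \<beta> \<alpha> r = f (r * \<alpha>) + sqrt 2 * \<beta> * r^2 * sqrt (1 - \<alpha>^2) + g_fun \<beta> r"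

end

theory Submission
  imports Defs
begin

text \<open>
  In the variable \<open>u = 1 - r\<^sup>2\<close> the function \<open>r \<mapsto> Btilde f \<beta> 0 r\<close> becomes, up to a constant,
  \<open>p(u) = ln u / 2 + \<beta>\<^sup>2 u\<^sup>2 / 2 - \<surd>2 \<beta> u\<close>, and it suffices that \<open>p\<close> is strictly increasing on
  \<open>(0, \<infinity>)\<close>. Its derivative is \<open>(\<beta> u - 1/\<surd>2)\<^sup>2 / u \<ge> 0\<close>, vanishing at one point only.
  To avoid this degenerate point we compare chords instead: for \<open>0 < a < b\<close> the logarithmic mean
  inequality gives \<open>ln (b/a) > 2 (b - a) / (a + b)\<close>, while AM-GM bounds the polynomial part of
  \<open>p b - p a\<close> from below by \<open>-(b - a) / (a + b)\<close>. No sign condition on \<open>\<beta>\<close> is needed.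
\<close>

lemma two_ratio_less_ln:
  fixes x :: real
  assumes "1 < x"
  shows "2 * (x - 1) / (x + 1) < ln x"
proof -
  let ?d = "\<lambda>x::real. ln x - 2 * (x - 1) / (x + 1)"
  have "?d 1 < ?d x"
  proof (rule DERIV_pos_imp_increasing_open[OF assms])
    fix y :: real
    assume y: "1 < y" "y < x"
    have "(?d has_real_derivative (1 / y - 4 / (y + 1)^2)) (at y)"
      using y by (auto intro!: derivative_eq_intros simp: field_simps power2_eq_square)
    moreover have "4 / (y + 1)^2 < 1 / y"
    proof -
      have "0 < (y - 1)^2"
        using y by simp
      then have "4 * y < (y + 1)^2"
        by (simp add: power2_eq_square algebra_simps)
      then show ?thesis
        using y by (simp add: divide_simps)
    qed
    ultimately show "\<exists>y'. (?d has_real_derivative y') (at y) \<and> 0 < y'"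
      by auto
  next
    show "continuous_on {1..x} ?d"
      by (intro continuous_intros) auto
  qed
  then show ?thesis
    by simp
qed

lemma two_diff_div_sum_less_ln_diff:
  fixes a b :: real
  assumes "0 < a" "a < b"
  shows "2 * (b - a) / (a + b) < ln b - ln a"
proof -
  have "b / a - 1 = (b - a) / a" "b / a + 1 = (a + b) / a"
    using assms by (auto simp: field_simps)
  then have "2 * (b - a) / (a + b) = 2 * (b / a - 1) / (b / a + 1)"
    using assms by simp
  also have "\<dots> < ln (b / a)"
    using assms by (intro two_ratio_less_ln) simp
  also have "\<dots> = ln b - ln a"
    using assms by (simp add: ln_div)
  finally show ?thesis .
qed

definition radial_profile :: "real \<Rightarrow> real \<Rightarrow> real" where
  "radial_profile \<beta> u = ln u / 2 + \<beta>^2 / 2 * u^2 - sqrt 2 * \<beta> * u"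

lemma radial_profile_strict_mono_on: "strict_mono_on {0<..} (radial_profile \<beta>)"
proof (rule strict_mono_onI)
  fix a b :: real
  assume "a \<in> {0<..}" "b \<in> {0<..}" "a < b"
  then have ab: "0 < a" "a < b"
    by auto
  have am_gm: "(a + b) * (2 * sqrt 2 * \<beta> - \<beta>^2 * (a + b)) \<le> 2"
    using zero_le_power2[of "\<beta> * (a + b) - sqrt 2"] by (simp add: power2_eq_square algebra_simps)
  have "(b - a) * (2 * sqrt 2 * \<beta> - \<beta>^2 * (a + b)) \<le> 2 * (b - a) / (a + b)"
    using ab am_gm mult_left_mono[of "(a + b) * (2 * sqrt 2 * \<beta> - \<beta>^2 * (a + b))" 2 "b - a"]
    by (simp add: field_simps)
  also have "\<dots> < ln b - ln a"
    using ab by (rule two_diff_div_sum_less_ln_diff)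
  finally show "radial_profile \<beta> a < radial_profile \<beta> b"
    unfolding radial_profile_def by (simp add: algebra_simps power2_eq_square)
qed

lemma Btilde_zero_eq_radial_profile:
  "Btilde f \<beta> 0 r = f 0 + sqrt 2 * \<beta> + radial_profile \<beta> (1 - r^2)"
  by (simp add: Btilde_def g_fun_def radial_profile_def algebra_simps)

theorem lemma5p4:
  fixes \<beta> :: real and f :: "real \<Rightarrow> real"
  assumes "\<beta> > 0"
  shows "\<forall>r s. 0 \<le> r \<and> r < s \<and> s < 1 \<longrightarrow> Btilde f \<beta> 0 s < Btilde f \<beta> 0 r"
proof (intro allI impI)
  fix r s :: real
  assume rs: "0 \<le> r \<and> r < s \<and> s < 1"
  then have "r^2 < s^2" "s^2 < 1"
    by (auto intro: power_strict_mono simp: abs_square_less_1)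
  then have "radial_profile \<beta> (1 - s^2) < radial_profile \<beta> (1 - r^2)"
    by (intro strict_mono_onD[OF radial_profile_strict_mono_on]) auto
  then show "Btilde f \<beta> 0 s < Btilde f \<beta> 0 r"
    by (simp add: Btilde_zero_eq_radial_profile)
qed

end
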